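(* Let $\theta$ be uniformly distributed on $[0,2\pi]$, let $k\in\{1,2,3\}$, $W=e^{-i\theta\sigma_k}$ and $G=\frac{\partial W}{\partial\theta}$. Let $A,C$ be arbitrary linear operators on $\mathbb{C}^2$ and let $B=D=\sigma_j$ for some $j\in\{0,1,2,3\}$. Then $$\mathbb{E}_\theta\,\text{Tr}[GAW^\dagger B]\,\text{Tr}[GCW^\dagger D]=\Big[\tfrac12-\tfrac{\delta_{j0}+\delta_{jk}}{2}\Big]\text{Tr}[AB]\,\text{Tr}[CD]+\Big[-\tfrac12-\tfrac{\delta_{j0}+\delta_{jk}}{2}\Big]\text{Tr}[AB\sigma_k]\,\text{Tr}[CD\sigma_k].$$
   Context: $\sigma_0=I$, $\sigma_1,\sigma_2,\sigma_3$ are the Pauli matrices $X,Y,Z$; $\delta$ is the Kronecker delta; $\mathbb{E}_\theta g=\frac1{2\pi}\int_0^{2\pi}g\,d\theta$. *)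

theory Defs
  imports "HOL-Analysis.Analysis"
begin

type_synonym cmat2 = "complex^2^2"

definition pauli :: "nat \<Rightarrow> cmat2" where
  "pauli j = (if j = 1 then vector [vector [0, 1], vector [1, 0]]
              else if j = 2 then vector [vector [0, - \<i>], vector [\<i>, 0]]
              else if j = 3 then vector [vector [1, 0], vector [0, -1]]
              else mat 1)"

definition mat_adj :: "cmat2 \<Rightarrow> cmat2" where
  "mat_adj M = (\<chi> i j. cnj (M $ j $ i))"

definition mat_pow :: "cmat2 \<Rightarrow> nat \<Rightarrow> cmat2" where
  "mat_pow M n = ((\<lambda>X. X ** M) ^^ n) (mat 1)"

definition mat_exp :: "cmat2 \<Rightarrow> cmat2" where
  "mat_exp M = (\<chi> a b. (\<Sum>n. (mat_pow M n) $ a $ b / of_nat (fact n)))"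

definition Wk :: "nat \<Rightarrow> real \<Rightarrow> cmat2" where
  "Wk k \<theta> = mat_exp (\<chi> a b. (- \<i> * complex_of_real \<theta>) * pauli k $ a $ b)"

definition Gk :: "nat \<Rightarrow> real \<Rightarrow> cmat2" where
  "Gk k \<theta> = vector_derivative (Wk k) (at \<theta>)"

end

theory Submission
  imports Defs
begin

text \<open>
  Since \<open>\<sigma>\<^sub>k\<^sup>2 = I\<close>, the exponential series splits into even and odd parts and
  \<open>W = cos \<theta> I - i sin \<theta> \<sigma>\<^sub>k\<close>, \<open>G = - sin \<theta> I - i cos \<theta> \<sigma>\<^sub>k\<close>.
  The Pauli matrix \<open>\<sigma>\<^sub>j\<close> commutes with \<open>\<sigma>\<^sub>k\<close> if \<open>j \<in> {0, k}\<close> and anticommutes otherwise;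
  with this sign \<open>\<epsilon>\<close> and cyclicity of the trace,
  \<open>Tr[G A W\<^sup>\<dagger> \<sigma>\<^sub>j] = -i (cos\<^sup>2\<theta> + \<epsilon> sin\<^sup>2\<theta>) Tr[A \<sigma>\<^sub>j \<sigma>\<^sub>k] + (\<epsilon> - 1) cos \<theta> sin \<theta> Tr[A \<sigma>\<^sub>j]\<close>.
  The average of a product of two such quadratic forms in \<open>cos \<theta>, sin \<theta>\<close> only involves
  the fourth moments \<open>E cos\<^sup>4 = E sin\<^sup>4 = 3/8\<close>, \<open>E cos\<^sup>2 sin\<^sup>2 = 1/8\<close>, the odd ones vanishing.
\<close>

definition scaleC :: "complex \<Rightarrow> cmat2 \<Rightarrow> cmat2" where
  "scaleC z M = (\<chi> a b. z * M $ a $ b)"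

lemma scaleC_one [simp]: "scaleC 1 M = M"
  by (simp add: vec_eq_iff scaleC_def)

lemma scaleC_scaleC [simp]: "scaleC z (scaleC w M) = scaleC (z * w) M"
  by (simp add: vec_eq_iff scaleC_def)

lemma scaleR_conv_scaleC: "r *\<^sub>R M = scaleC (complex_of_real r) M"
  by (simp only: vec_eq_iff scaleC_def vector_scaleR_component vec_lambda_beta)
    (simp add: scaleR_conv_of_real)

lemma matrix_mult_scaleC_left [simp]: "scaleC z X ** Y = scaleC z (X ** Y)"
  by (simp add: vec_eq_iff matrix_matrix_mult_def scaleC_def sum_distrib_left mult.assoc)

lemma matrix_mult_scaleC_right [simp]: "X ** scaleC z Y = scaleC z (X ** Y)"
  by (simp add: vec_eq_iff matrix_matrix_mult_def scaleC_def sum_distrib_left mult.left_commute)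

lemma trace_scaleC [simp]: "trace (scaleC z M) = z * trace M"
  by (simp add: trace_def scaleC_def sum_distrib_left)

lemma matrix_add_rdistrib: "((A :: 'a::semiring_1^'n^'m) + B) ** C = A ** C + B ** C"
  by (vector matrix_matrix_mult_def sum.distrib[symmetric] field_simps)

lemma matrix_diff_ldistrib: "(A :: 'a::ring_1^'n^'m) ** (B - C) = A ** B - A ** C"
  by (vector matrix_matrix_mult_def sum_subtractf[symmetric] field_simps)

lemma matrix_diff_rdistrib: "((A :: 'a::ring_1^'n^'m) - B) ** C = A ** C - B ** C"
  by (vector matrix_matrix_mult_def sum_subtractf[symmetric] field_simps)

lemma mat_pow_scaleC_involution:
  assumes "P ** P = mat 1"
  shows "mat_pow (scaleC z P) n = scaleC (z ^ n) (if even n then mat 1 else P)"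
  by (induction n) (auto simp: mat_pow_def assms mult.commute)

lemma mat_exp_scaleC_involution:
  assumes "P ** P = mat 1"
  shows "mat_exp (scaleC z P) = scaleC (cosh z) (mat 1) + scaleC (sinh z) P"
proof -
  have "(\<lambda>n. (mat_pow (scaleC z P) n) $ a $ b / of_nat (fact n))
          sums (cosh z * mat 1 $ a $ b + sinh z * P $ a $ b)" for a b
  proof -
    have "(mat_pow (scaleC z P) n) $ a $ b / of_nat (fact n)
          = (if even n then z ^ n /\<^sub>R fact n else 0) * mat 1 $ a $ b
            + (if even n then 0 else z ^ n /\<^sub>R fact n) * P $ a $ b" for n
      unfolding mat_pow_scaleC_involution[OF assms]
      by (simp add: scaleC_def scaleR_conv_of_real field_simps)
    moreover have "(\<lambda>n. (if even n then z ^ n /\<^sub>R fact n else 0) * mat 1 $ a $ b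
             + (if even n then 0 else z ^ n /\<^sub>R fact n) * P $ a $ b)
          sums (cosh z * mat 1 $ a $ b + sinh z * P $ a $ b)"
      by (intro sums_add sums_mult2 cosh_converges sinh_converges)
    ultimately show ?thesis
      by simp
  qed
  then show ?thesis
    by (simp add: vec_eq_iff mat_exp_def scaleC_def sums_unique[symmetric])
qed

lemma pauli_involution: "pauli k ** pauli k = mat 1"
  by (simp add: vec_eq_iff forall_2 pauli_def matrix_matrix_mult_def sum_2 mat_def)

lemma mat_adj_pauli: "mat_adj (pauli k) = pauli k"
  by (simp add: vec_eq_iff forall_2 pauli_def mat_adj_def mat_def)

lemma pauli_commute_or_anticommute:
  assumes "k \<in> {1, 2, 3}" and "j \<in> {0, 1, 2, 3}"
  shows "pauli k ** pauli j = scaleC (if j = 0 \<or> j = k then 1 else -1) (pauli j ** pauli k)"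
  using assms
  by (auto simp: vec_eq_iff forall_2 pauli_def matrix_matrix_mult_def sum_2 mat_def scaleC_def)

lemma Wk_eq: "Wk k \<theta> = cos \<theta> *\<^sub>R mat 1 + sin \<theta> *\<^sub>R scaleC (- \<i>) (pauli k)"
proof -
  have "Wk k \<theta> = mat_exp (scaleC (- \<i> * \<theta>) (pauli k))"
    by (simp add: Wk_def scaleC_def)
  also have "\<dots> = scaleC (cos \<theta>) (mat 1) + scaleC (- \<i> * sin \<theta>) (pauli k)"
    by (simp add: mat_exp_scaleC_involution pauli_involution cosh_conv_cos sinh_conv_sin
        cos_of_real sin_of_real)
  finally show ?thesis
    by (simp add: scaleR_conv_scaleC mult.commute)
qed

lemma Gk_eq: "Gk k \<theta> = (- sin \<theta>) *\<^sub>R mat 1 + cos \<theta> *\<^sub>R scaleC (- \<i>) (pauli k)"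
proof -
  have "(Wk k has_vector_derivative
          (- sin \<theta>) *\<^sub>R mat 1 + cos \<theta> *\<^sub>R scaleC (- \<i>) (pauli k)) (at \<theta>)"
    unfolding Wk_eq[abs_def] by (auto intro!: derivative_eq_intros)
  then show ?thesis
    by (simp add: Gk_def vector_derivative_at)
qed

lemma mat_adj_Wk: "mat_adj (Wk k \<theta>) = cos \<theta> *\<^sub>R mat 1 - sin \<theta> *\<^sub>R scaleC (- \<i>) (pauli k)"
  using mat_adj_pauli[of k]
  by (simp add: Wk_eq vec_eq_iff mat_adj_def scaleC_def mat_def)

lemma trace_rotation_sandwich:
  fixes c s :: real and \<epsilon> :: complex and P B X :: cmat2
  assumes "P ** P = mat 1" and "P ** B = scaleC \<epsilon> (B ** P)"
  defines "S \<equiv> scaleC (- \<i>) P"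
  shows "trace (((- s) *\<^sub>R mat 1 + c *\<^sub>R S) ** X ** (c *\<^sub>R mat 1 - s *\<^sub>R S) ** B)
    = (of_real c)\<^sup>2 * (- \<i> * trace (X ** B ** P))
      + of_real c * of_real s * ((\<epsilon> - 1) * trace (X ** B))
      + (of_real s)\<^sup>2 * (- \<i> * \<epsilon> * trace (X ** B ** P))"
proof -
  have "trace (((- s) *\<^sub>R mat 1 + c *\<^sub>R S) ** X ** (c *\<^sub>R mat 1 - s *\<^sub>R S) ** B)
      = (of_real c)\<^sup>2 * trace (S ** X ** B)
        - of_real c * of_real s * (trace (X ** B) + trace (S ** X ** S ** B))
        + (of_real s)\<^sup>2 * trace (X ** S ** B)"
    by (simp add: scaleR_conv_scaleC matrix_add_rdistrib matrix_diff_rdistrib matrix_diff_ldistrib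
        trace_add trace_sub matrix_mul_assoc algebra_simps power2_eq_square)
  moreover have "trace (S ** X ** B) = - \<i> * trace (X ** B ** P)"
    using trace_mul_sym[of P "X ** B"] by (simp add: S_def matrix_mul_assoc)
  moreover have "trace (X ** S ** B) = - \<i> * \<epsilon> * trace (X ** B ** P)"
    by (simp add: S_def assms(2) matrix_mul_assoc[symmetric])
  moreover have "trace (S ** X ** S ** B) = - \<epsilon> * trace (X ** B)"
    using trace_mul_sym[of P "X ** P ** B"]
    by (simp add: S_def assms(1,2) matrix_mul_assoc[symmetric] matrix_mul_assoc[of _ P P])
  ultimately show ?thesis
    by (simp add: algebra_simps)
qed

lemma has_integral_real_antiderivative:
  fixes F f :: "real \<Rightarrow> real"
  assumes "a \<le> b" and "\<And>x. (F has_real_derivative f x) (at x)" and "F b - F a = I"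
  shows "(f has_integral I) {a..b}"
proof -
  have "(f has_integral F b - F a) {a..b}"
    using assms(1,2)
    by (intro fundamental_theorem_of_calculus)
       (auto simp: has_real_derivative_iff_has_vector_derivative intro: has_vector_derivative_at_within)
  then show ?thesis
    using assms(3) by simp
qed

lemma has_integral_cos_pow4: "((\<lambda>x. cos x ^ 4) has_integral 3 * pi / 4) {0..2 * pi}"
proof (rule has_integral_real_antiderivative)
  show "((\<lambda>x. 3 * x / 8 + 3 * sin x * cos x / 8 + sin x * cos x ^ 3 / 4)
          has_real_derivative cos x ^ 4) (at x)" for x
    by (auto intro!: derivative_eq_intros) (use sin_cos_squared_add[of x] in algebra)
qed simp_all

lemma has_integral_sin_pow4: "((\<lambda>x. sin x ^ 4) has_integral 3 * pi / 4) {0..2 * pi}"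
proof (rule has_integral_real_antiderivative)
  show "((\<lambda>x. 3 * x / 8 - 5 * sin x * cos x / 8 + sin x * cos x ^ 3 / 4)
          has_real_derivative sin x ^ 4) (at x)" for x
    by (auto intro!: derivative_eq_intros) (use sin_cos_squared_add[of x] in algebra)
qed simp_all

lemma has_integral_cos_sq_sin_sq: "((\<lambda>x. cos x ^ 2 * sin x ^ 2) has_integral pi / 4) {0..2 * pi}"
proof (rule has_integral_real_antiderivative)
  show "((\<lambda>x. x / 8 + sin x * cos x / 8 - sin x * cos x ^ 3 / 4)
          has_real_derivative cos x ^ 2 * sin x ^ 2) (at x)" for x
    by (auto intro!: derivative_eq_intros) (use sin_cos_squared_add[of x] in algebra)
qed simp_all

lemma has_integral_cos_cube_sin: "((\<lambda>x. cos x ^ 3 * sin x) has_integral 0) {0..2 * pi}"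
proof (rule has_integral_real_antiderivative)
  show "((\<lambda>x. - (cos x ^ 4) / 4)
          has_real_derivative cos x ^ 3 * sin x) (at x)" for x
    by (auto intro!: derivative_eq_intros simp: algebra_simps)
qed simp_all

lemma has_integral_cos_sin_cube: "((\<lambda>x. cos x * sin x ^ 3) has_integral 0) {0..2 * pi}"
proof (rule has_integral_real_antiderivative)
  show "((\<lambda>x. sin x ^ 4 / 4)
          has_real_derivative cos x * sin x ^ 3) (at x)" for x
    by (auto intro!: derivative_eq_intros simp: algebra_simps)
qed simp_all

lemma integral_product_trig_quadratic_forms:
  fixes a b d a' b' d' :: complex
  defines "Q \<equiv> \<lambda>a b d t. (of_real (cos t))\<^sup>2 * a + of_real (cos t) * of_real (sin t) * b
                          + (of_real (sin t))\<^sup>2 * d"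
  shows "integral {0..2 * pi} (\<lambda>t. Q a b d t * Q a' b' d' t)
    = of_real pi * (3 * a * a' + a * d' + d * a' + b * b' + 3 * d * d') / 4"
proof -
  have expand: "Q a b d t * Q a' b' d' t
    = of_real (cos t ^ 4) * (a * a') + of_real (cos t ^ 3 * sin t) * (a * b' + b * a')
      + of_real (cos t ^ 2 * sin t ^ 2) * (a * d' + d * a' + b * b')
      + of_real (cos t * sin t ^ 3) * (b * d' + d * b') + of_real (sin t ^ 4) * (d * d')" for t
    by (simp add: Q_def algebra_simps power2_eq_square power3_eq_cube power4_eq_xxxx)
  have "((\<lambda>t. Q a b d t * Q a' b' d' t) has_integral
      of_real (3 * pi / 4) * (a * a') + of_real 0 * (a * b' + b * a')
      + of_real (pi / 4) * (a * d' + d * a' + b * b')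
      + of_real 0 * (b * d' + d * b') + of_real (3 * pi / 4) * (d * d')) {0..2 * pi}"
    unfolding expand
    by (intro has_integral_add has_integral_mult_left has_integral_of_real has_integral_cos_pow4
        has_integral_cos_cube_sin has_integral_cos_sq_sin_sq has_integral_cos_sin_cube
        has_integral_sin_pow4)
  then have "integral {0..2 * pi} (\<lambda>t. Q a b d t * Q a' b' d' t)
      = of_real (3 * pi / 4) * (a * a') + of_real 0 * (a * b' + b * a')
      + of_real (pi / 4) * (a * d' + d * a' + b * b')
      + of_real 0 * (b * d' + d * b') + of_real (3 * pi / 4) * (d * d')"
    by (rule integral_unique)
  also have "\<dots> = of_real pi * (3 * a * a' + a * d' + d * a' + b * b' + 3 * d * d') / 4"
    by (simp add: algebra_simps)
  finally show ?thesis .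
qed

lemma trace_Gk_Wk:
  assumes "pauli k ** B = scaleC \<epsilon> (B ** pauli k)"
  shows "trace (Gk k \<theta> ** X ** mat_adj (Wk k \<theta>) ** B)
    = (of_real (cos \<theta>))\<^sup>2 * (- \<i> * trace (X ** B ** pauli k))
      + of_real (cos \<theta>) * of_real (sin \<theta>) * ((\<epsilon> - 1) * trace (X ** B))
      + (of_real (sin \<theta>))\<^sup>2 * (- \<i> * \<epsilon> * trace (X ** B ** pauli k))"
  unfolding Gk_eq mat_adj_Wk by (rule trace_rotation_sandwich[OF pauli_involution assms])

theorem lemma4:
  fixes A C :: "complex^2^2" and k j :: nat
  assumes "k \<in> {1, 2, 3}" and "j \<in> {0, 1, 2, 3}"
  defines "B \<equiv> pauli j" and "D \<equiv> pauli j"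
  shows "integral {0..2*pi}
           (\<lambda>\<theta>. trace (Gk k \<theta> ** A ** mat_adj (Wk k \<theta>) ** B)
               * trace (Gk k \<theta> ** C ** mat_adj (Wk k \<theta>) ** D)) / (2 * pi)
         = (1/2 - (of_bool (j = 0) + of_bool (j = k)) / 2) * trace (A ** B) * trace (C ** D)
           + (- 1/2 - (of_bool (j = 0) + of_bool (j = k)) / 2)
               * trace (A ** B ** pauli k) * trace (C ** D ** pauli k)"
proof -
  define \<epsilon> :: complex where "\<epsilon> = (if j = 0 \<or> j = k then 1 else -1)"
  define p p' q q' where "p = trace (A ** B ** pauli k)" and "p' = trace (C ** B ** pauli k)"
    and "q = trace (A ** B)" and "q' = trace (C ** B)"
  have sign: "pauli k ** B = scaleC \<epsilon> (B ** pauli k)"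
    unfolding \<epsilon>_def B_def using assms(1,2) by (rule pauli_commute_or_anticommute)
  have integral_eq: "integral {0..2*pi}
           (\<lambda>\<theta>. trace (Gk k \<theta> ** A ** mat_adj (Wk k \<theta>) ** B)
               * trace (Gk k \<theta> ** C ** mat_adj (Wk k \<theta>) ** D))
    = of_real pi * (3 * (- \<i> * p) * (- \<i> * p') + (- \<i> * p) * (- \<i> * \<epsilon> * p')
        + (- \<i> * \<epsilon> * p) * (- \<i> * p') + ((\<epsilon> - 1) * q) * ((\<epsilon> - 1) * q')
        + 3 * (- \<i> * \<epsilon> * p) * (- \<i> * \<epsilon> * p')) / 4" (is "_ = of_real pi * ?X / 4")
    unfolding p_def p'_def q_def q'_def D_def B_def[symmetric] trace_Gk_Wk[OF sign]
    by (rule integral_product_trig_quadratic_forms)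
  have "of_bool (j = 0) + of_bool (j = k) = (if j = 0 \<or> j = k then 1 else 0 :: complex)"
    using assms(1) by auto
  then have "of_real pi * ?X / 4 / (2 * pi)
    = (1/2 - (of_bool (j = 0) + of_bool (j = k)) / 2) * q * q'
      + (- 1/2 - (of_bool (j = 0) + of_bool (j = k)) / 2) * p * p'"
    by (simp add: \<epsilon>_def field_simps)
  then show ?thesis
    unfolding integral_eq unfolding D_def B_def[symmetric] p_def p'_def q_def q'_def .
qed

end
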